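(* Let $d,R\in\mathbb N$, $p\in(0,1)$, $\mathsf v>0$. Let $(M_t)=(\eta_t,\zeta_t)$ be the voter model with range $R$ on dynamical percolation with parameters $\mathsf v,p$, and let $(\mathcal C_t,\mathcal A_t,\mathcal B_t)$ be the coalescing random walks on dynamical percolation chain. Define, for $\eta\in\{0,1\}^{\mathbb Z^d}$, $\zeta\in\{0,1\}^{E(\mathbb Z^d)}$, finite $C\subseteq\mathbb Z^d$ and finite disjoint $E,F\subseteq E(\mathbb Z^d)$, $$H(\eta,\zeta,C,E,F)=p^{-|E|}(1-p)^{-|F|}\prod_{x\in C}\eta(x)\prod_{e\in E}\zeta(e)\prod_{e\in F}(1-\zeta(e)).$$ Then for all such $\eta,\zeta,C,E,F$ and all $t\ge0$, $$E_{\eta,\zeta}\big[H(\eta_t,\zeta_t,C,E,F)\big]=\mathbf E_{C,E,F}\big[H(\eta,\zeta,\mathcal C_t,\mathcal A_t,\mathcal B_t)\big],$$ where $E_{\eta,\zeta}$ is expectation for $(M_t)$ started at $(\eta,\zeta)$ and $\mathbf E_{C,E,F}$ for the chain started at $(C,E,F)$.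
   Context: $B_1(x,R)=\{y:|y-x|_1\le R\}$, $|B_1(R)|$ its cardinality, $E_1(x,R)$ the nearest-neighbour edges with both endpoints in $B_1(x,R)$. Dynamical percolation: each edge independently flips 0→1 at rate $p\mathsf v$ and 1→0 at rate $(1-p)\mathsf v$ (1 = open). The voter model with range $R$ on dynamical percolation is the process $(\eta_t,\zeta_t)$ on $\{0,1\}^{\mathbb Z^d}\times\{0,1\}^{E(\mathbb Z^d)}$ where $\zeta_t$ evolves as dynamical percolation and, for each ordered pair $(x,y)$ with $1\le|x-y|_1\le R$, at rate $1/(|B_1(R)|-1)$ site $x$ adopts $\eta_t(y)$ provided $x$ and $y$ are joined by a path of $\zeta_t$-open edges with all vertices in $B_1(x,R)$. The coalescing random walks on dynamical percolation chain $(\mathcal C_t,\mathcal A_t,\mathcal B_t)$ has state space: $C$ a finite subset of $\mathbb Z^d$, $E,F$ disjoint finite sets of edges, and jump rates: (i) $(C,E,F)\to(C,E\setminus\{e\},F\setminus\{e\})$ at rate $\mathsf v$ for each $e\in E\cup F$; (ii) for each $x\in C$, $y\in B_1(x,R)\setminus\{x\}$, and each partition $(E',F')$ of $E_1(x,R)\setminus(E\cup F)$ into two disjoint sets, at rate $p^{|E'|}(1-p)^{|F'|}/(|B_1(R)|-1)$ the chain jumps to $((C\setminus\{x\})\cup\{y\},E\cup E',F\cup F')$ if $x$ and $y$ are joined by a path using only edges of $E\cup E'$ with all vertices in $B_1(x,R)$, and to $(C,E\cup E',F\cup F')$ otherwise. *)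

theory Defs
  imports "HOL-Probability.Probability"
begin

(* Sites of Z^d: functions 'd => int, with 'd a finite (nonempty) index type of size d. *)
type_synonym 'd site = "'d \<Rightarrow> int"
(* Nearest-neighbour edges of Z^d: (z,i) is the edge {z, z + unit vector i}.
   This is a bijective encoding of E(Z^d). *)
type_synonym 'd edge = "('d \<Rightarrow> int) \<times> 'd"

definition dist1 :: "'d::finite site \<Rightarrow> 'd site \<Rightarrow> int" where
  "dist1 x y = (\<Sum>j\<in>UNIV. \<bar>x j - y j\<bar>)"

definition ball1 :: "'d::finite site \<Rightarrow> nat \<Rightarrow> 'd site set" where
  "ball1 x R = {y. dist1 y x \<le> int R}"

definition ballcard :: "'d::finite itself \<Rightarrow> nat \<Rightarrow> nat" where
  "ballcard _ R = card (ball1 (\<lambda>_::'d. 0) R)"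

definition ends :: "'d edge \<Rightarrow> 'd site set" where
  "ends e = {fst e, (\<lambda>j. fst e j + (if j = snd e then 1 else 0))}"

definition edges1 :: "'d::finite site \<Rightarrow> nat \<Rightarrow> 'd edge set" where
  "edges1 x R = {e. ends e \<subseteq> ball1 x R}"

definition joined :: "'d::finite edge set \<Rightarrow> 'd site \<Rightarrow> nat \<Rightarrow> 'd site \<Rightarrow> bool" where
  "joined S x R y \<longleftrightarrow>
     (x, y) \<in> {(u, w). u \<in> ball1 x R \<and> w \<in> ball1 x R \<and> (\<exists>e\<in>S. ends e = {u, w})}\<^sup>*"

type_synonym 'd vconf = "('d site \<Rightarrow> bool) \<times> ('d edge \<Rightarrow> bool)"

(* state space {0,1}^{Z^d} x {0,1}^{E(Z^d)} with the product sigma-algebra (1 = True) *)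
definition VM :: "'d::finite vconf measure" where
  "VM = (PiM UNIV (\<lambda>_. count_space UNIV)) \<Otimes>\<^sub>M (PiM UNIV (\<lambda>_. count_space UNIV))"

definition is_local :: "('d::finite vconf \<Rightarrow> real) \<Rightarrow> bool" where
  "is_local f \<longleftrightarrow> (\<exists>A B. finite A \<and> finite B \<and>
      (\<forall>\<eta> \<zeta> \<eta>' \<zeta>'. (\<forall>x\<in>A. \<eta> x = \<eta>' x) \<longrightarrow> (\<forall>e\<in>B. \<zeta> e = \<zeta>' e) \<longrightarrow>
          f (\<eta>, \<zeta>) = f (\<eta>', \<zeta>')))"

definition voter_gen :: "real \<Rightarrow> real \<Rightarrow> nat \<Rightarrow> ('d::finite vconf \<Rightarrow> real) \<Rightarrow> 'd vconf \<Rightarrow> real" where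
  "voter_gen p v R f \<xi> =
     (case \<xi> of (\<eta>, \<zeta>) \<Rightarrow>
       (\<Sum>\<^sub>\<infinity>e\<in>UNIV. (if \<zeta> e then (1 - p) * v else p * v) * (f (\<eta>, \<zeta>(e := \<not> \<zeta> e)) - f (\<eta>, \<zeta>)))
     + (\<Sum>\<^sub>\<infinity>x\<in>UNIV. \<Sum>y\<in>ball1 x R - {x}.
           (1 / (real (ballcard TYPE('d) R) - 1)) * of_bool (joined {e. \<zeta> e} x R y)
             * (f (\<eta>(x := \<eta> y), \<zeta>) - f (\<eta>, \<zeta>))))"

(* mu xi t is the law of (eta_t, zeta_t) for the voter model on dynamical percolation started
   at xi; it is characterised by mu xi 0 = delta_xi and the Kolmogorov forward equation
   d/dt E[f(M_t)] = E[(Omega f)(M_t)] for all local (cylinder) functions f. *)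
definition voter_law :: "real \<Rightarrow> real \<Rightarrow> nat \<Rightarrow> ('d::finite vconf \<Rightarrow> real \<Rightarrow> 'd vconf measure) \<Rightarrow> bool" where
  "voter_law p v R \<mu> \<longleftrightarrow>
     (\<forall>\<xi>. \<mu> \<xi> 0 = return VM \<xi>
        \<and> (\<forall>t\<ge>0. prob_space (\<mu> \<xi> t) \<and> sets (\<mu> \<xi> t) = sets VM)
        \<and> (\<forall>f. is_local f \<and> f \<in> borel_measurable VM \<longrightarrow>
              (\<forall>t\<ge>0. ((\<lambda>s. \<integral>\<omega>. f \<omega> \<partial>(\<mu> \<xi> s)) has_real_derivative
                          (\<integral>\<omega>. voter_gen p v R f \<omega> \<partial>(\<mu> \<xi> t))) (at t within {0..}))))"

type_synonym 'd dstate = "'d site set \<times> 'd edge set \<times> 'd edge set"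

(* Sum over all transitions of the chain out of state s of  rate * g(target).
   Transitions (i) and (ii) are listed exactly as in the definition (including the
   possibly trivial jumps of type (ii)). *)
definition dual_jumpsum :: "real \<Rightarrow> real \<Rightarrow> nat \<Rightarrow> ('d::finite dstate \<Rightarrow> real) \<Rightarrow> 'd dstate \<Rightarrow> real" where
  "dual_jumpsum p v R g s =
     (case s of (C, E, F) \<Rightarrow>
        (\<Sum>e\<in>E \<union> F. v * g (C, E - {e}, F - {e}))
      + (\<Sum>x\<in>C. \<Sum>y\<in>ball1 x R - {x}. \<Sum>E'\<in>Pow (edges1 x R - (E \<union> F)).
           (let F' = (edges1 x R - (E \<union> F)) - E' in
             p ^ card E' * (1 - p) ^ card F' / (real (ballcard TYPE('d) R) - 1)
             * g (if joined (E \<union> E') x R y then (C - {x}) \<union> {y} else C, E \<union> E', F \<union> F'))))"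

definition dual_q :: "real \<Rightarrow> real \<Rightarrow> nat \<Rightarrow> 'd::finite dstate \<Rightarrow> real" where
  "dual_q p v R s = dual_jumpsum p v R (\<lambda>_. 1) s"

(* dual_u p v R g n t s = E_s[ g(X_t) ; exactly n jumps in [0,t] ] (first-jump decomposition) *)
primrec dual_u :: "real \<Rightarrow> real \<Rightarrow> nat \<Rightarrow> ('d::finite dstate \<Rightarrow> real) \<Rightarrow> nat \<Rightarrow> real \<Rightarrow> 'd dstate \<Rightarrow> real" where
  "dual_u p v R g 0 t s = exp (- dual_q p v R s * t) * g s"
| "dual_u p v R g (Suc n) t s =
     integral {0..t} (\<lambda>r. exp (- dual_q p v R s * r) * dual_jumpsum p v R (dual_u p v R g n (t - r)) s)"

(* E_{s}[ g(X_t) ] for the (minimal = non-explosive) continuous-time chain, g \<ge> 0 *)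
definition dual_expect :: "real \<Rightarrow> real \<Rightarrow> nat \<Rightarrow> ('d::finite dstate \<Rightarrow> real) \<Rightarrow> real \<Rightarrow> 'd dstate \<Rightarrow> real" where
  "dual_expect p v R g t s = (\<Sum>n. dual_u p v R g n t s)"

definition Hfun :: "real \<Rightarrow> 'd::finite vconf \<Rightarrow> 'd dstate \<Rightarrow> real" where
  "Hfun p \<xi> s = (case \<xi> of (\<eta>, \<zeta>) \<Rightarrow> case s of (C, E, F) \<Rightarrow>
      p powi (- int (card E)) * (1 - p) powi (- int (card F))
      * (\<Prod>x\<in>C. of_bool (\<eta> x)) * (\<Prod>e\<in>E. of_bool (\<zeta> e)) * (\<Prod>e\<in>F. 1 - of_bool (\<zeta> e)))"

end

theory Submission
  imports Defs "HOL-Analysis.Harmonic_Numbers"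
begin

text \<open>The voter generator applied to \<open>H(\<cdot>, s)\<close> coincides with the generator of the dual chain
  applied to \<open>H(\<xi>, \<cdot>)\<close>. Hence \<open>u(t, s) = E\<^sub>\<xi> H(M\<^sub>t, s)\<close> solves the backward equation
  \<open>u' = J u - q u\<close> of the dual chain, and variation of constants turns this into the first-jump
  equation \<open>u = u\<^sub>0 + T u\<close>; iterating gives \<open>u = u\<^sub>0 + \<dots> + u\<^sub>N\<^sub>-\<^sub>1 + T\<^sup>N u\<close>, where \<open>u\<^sub>n\<close> is the
  contribution of paths with exactly \<open>n\<close> jumps. The remainder vanishes because
  \<open>0 \<le> u(t, s) \<le> p ^ -|E| (1 - p) ^ -|F|\<close> while the total jump rate grows at most linearly in the
  number of jumps: \<open>T\<^sup>N u\<close> is then dominated by a product of factors \<open>l / (l + 1)\<close> over an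
  arithmetic progression of levels \<open>l\<close>, which tends to \<open>0\<close> since the harmonic series diverges.\<close>

section \<open>Elementary analysis\<close>

lemma infsum_eq_sum_support:
  fixes f :: "'a \<Rightarrow> 'b::{comm_monoid_add, t2_space}"
  assumes "finite A" "\<And>x. x \<notin> A \<Longrightarrow> f x = 0"
  shows "infsum f UNIV = sum f A"
proof -
  have "infsum f UNIV = infsum f A"
    by (rule infsum_cong_neutral) (use assms in auto)
  with assms(1) show ?thesis by simp
qed

lemma prod_of_bool_eq:
  "finite A \<Longrightarrow> (\<Prod>x\<in>A. of_bool (P x) :: 'b::comm_semiring_1) = of_bool (\<forall>x\<in>A. P x)"
  by (induction rule: finite_induct) auto

lemma linear_ode_variation_of_constants:
  fixes u G :: "real \<Rightarrow> real" and q t :: real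
  assumes t: "0 \<le> t"
    and deriv: "\<And>r. r \<in> {0..t} \<Longrightarrow> (u has_real_derivative (G r - q * u r)) (at r within {0..t})"
  shows "u t = exp (- q * t) * u 0 + integral {0..t} (\<lambda>r. exp (- q * r) * G (t - r))"
proof -
  let ?\<phi> = "\<lambda>r. exp (- q * r) * u (t - r)"
  have "(?\<phi> has_real_derivative - (exp (- q * r) * G (t - r))) (at r within {0..t})" if r: "r \<in> {0..t}" for r
  proof -
    have outer: "(u has_real_derivative (G (t - r) - q * u (t - r))) (at (t - r) within ((\<lambda>r. t - r) ` {0..t}))"
      using deriv[of "t - r"] r by (auto intro: DERIV_subset)
    have inner: "((\<lambda>r. t - r) has_real_derivative - 1) (at r within {0..t})"
      by (auto intro!: derivative_eq_intros)
    have "((\<lambda>r. u (t - r)) has_real_derivative (G (t - r) - q * u (t - r)) * - 1) (at r within {0..t})"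
      using DERIV_image_chain[OF outer inner] by (simp add: o_def)
    then show ?thesis
      by (auto intro!: derivative_eq_intros simp: algebra_simps)
  qed
  then have "((\<lambda>r. - (exp (- q * r) * G (t - r))) has_integral (?\<phi> t - ?\<phi> 0)) {0..t}"
    using t by (intro fundamental_theorem_of_calculus) (auto simp: has_real_derivative_iff_has_vector_derivative)
  from integral_unique[OF has_integral_neg[OF this]] show ?thesis by simp
qed

lemma integral_exp_convolution:
  fixes G :: "real \<Rightarrow> real"
  assumes t: "0 \<le> t" and G: "continuous_on {0..t} G"
  shows "integral {0..t} (\<lambda>r. exp (- q * r) * G (t - r)) = exp (- q * t) * integral {0..t} (\<lambda>\<sigma>. exp (q * \<sigma>) * G \<sigma>)"
proof -
  let ?u = "\<lambda>\<tau>. exp (- q * \<tau>) * integral {0..\<tau>} (\<lambda>\<sigma>. exp (q * \<sigma>) * G \<sigma>)"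
  have cont: "continuous_on {0..t} (\<lambda>\<sigma>. exp (q * \<sigma>) * G \<sigma>)" using G by (intro continuous_intros)
  have "?u t = exp (- q * t) * ?u 0 + integral {0..t} (\<lambda>r. exp (- q * r) * G (t - r))"
  proof (rule linear_ode_variation_of_constants[OF t])
    fix r assume r: "r \<in> {0..t}"
    have "((\<lambda>\<tau>. integral {0..\<tau>} (\<lambda>\<sigma>. exp (q * \<sigma>) * G \<sigma>)) has_real_derivative exp (q * r) * G r) (at r within {0..t})"
      using integral_has_vector_derivative[OF cont r] by (simp add: has_real_derivative_iff_has_vector_derivative)
    then show "(?u has_real_derivative (G r - q * ?u r)) (at r within {0..t})"
      by (auto intro!: derivative_eq_intros simp: algebra_simps exp_minus field_simps)
  qed
  then show ?thesis by simp
qed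

lemma has_integral_exp_neg:
  fixes a t :: real
  assumes "0 < a" "0 \<le> t"
  shows "((\<lambda>r. exp (- a * r)) has_integral ((1 - exp (- a * t)) / a)) {0..t}"
proof -
  have "((\<lambda>r. exp (- a * r)) has_integral (- exp (- a * t) / a - - exp (- a * 0) / a)) {0..t}"
    using assms by (intro fundamental_theorem_of_calculus)
      (auto intro!: derivative_eq_intros simp flip: has_real_derivative_iff_has_vector_derivative)
  then show ?thesis by (simp add: diff_divide_distrib)
qed

definition arith_ratio_prod :: "real \<Rightarrow> real \<Rightarrow> nat \<Rightarrow> real" where
  "arith_ratio_prod D x N = (\<Prod>i<N. (x + real i * D) / (x + real i * D + 1))"

lemma arith_ratio_prod_0 [simp]: "arith_ratio_prod D x 0 = 1"
  by (simp add: arith_ratio_prod_def)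

lemma arith_ratio_prod_Suc: "arith_ratio_prod D x (Suc N) = x / (x + 1) * arith_ratio_prod D (x + D) N"
  unfolding arith_ratio_prod_def prod.lessThan_Suc_shift by (simp add: algebra_simps)

lemma divide_plus_one_mono: "0 \<le> a \<Longrightarrow> a \<le> b \<Longrightarrow> a / (a + 1) \<le> b / (b + (1::real))"
  by (simp add: divide_simps) (simp add: algebra_simps)

lemma arith_ratio_prod_nonneg: "0 \<le> x \<Longrightarrow> 0 \<le> D \<Longrightarrow> 0 \<le> arith_ratio_prod D x N"
  unfolding arith_ratio_prod_def by (intro prod_nonneg) auto

lemma arith_ratio_prod_mono: "0 \<le> x \<Longrightarrow> x \<le> y \<Longrightarrow> 0 \<le> D \<Longrightarrow> arith_ratio_prod D x N \<le> arith_ratio_prod D y N"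
  unfolding arith_ratio_prod_def by (intro prod_mono conjI divide_plus_one_mono) auto

text \<open>Each factor is at most \<open>exp (- 1 / (c (i + 1)))\<close> with \<open>c = x + D + 1\<close>, and the harmonic series diverges.\<close>

lemma arith_ratio_prod_tendsto_0:
  assumes x: "0 \<le> x" and D: "0 \<le> D"
  shows "arith_ratio_prod D x \<longlonglongrightarrow> 0"
proof -
  define c where "c = x + D + 1"
  have c: "c \<ge> 1" using x D by (simp add: c_def)
  have factor_le: "(x + real i * D) / (x + real i * D + 1) \<le> exp (- (1 / c) * inverse (real (Suc i)))" for i
  proof -
    let ?y = "x + real i * D"
    have y: "0 \<le> ?y" using x D by simp
    have "?y + 1 \<le> c * real (Suc i)" unfolding c_def using x D by (simp add: algebra_simps)
    then have "1 / (c * real (Suc i)) \<le> 1 / (?y + 1)" using y c by (intro divide_left_mono) auto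
    then have exponent_le: "- 1 / (?y + 1) \<le> - (1 / c) * inverse (real (Suc i))" by (simp add: field_simps)
    have "?y / (?y + 1) = 1 + (- 1 / (?y + 1))" using y by (simp add: field_simps)
    also have "\<dots> \<le> exp (- 1 / (?y + 1))" by (rule exp_ge_add_one_self)
    also have "\<dots> \<le> exp (- (1 / c) * inverse (real (Suc i)))" using exponent_le by simp
    finally show ?thesis .
  qed
  have le: "arith_ratio_prod D x N \<le> exp (- (1 / c) * harm N)" for N
  proof -
    have "arith_ratio_prod D x N \<le> (\<Prod>i<N. exp (- (1 / c) * inverse (real (Suc i))))"
      unfolding arith_ratio_prod_def using x D factor_le by (intro prod_mono) auto
    also have "\<dots> = exp (- (1 / c) * harm N)"
      by (simp add: exp_sum harm_altdef sum_distrib_left)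
    finally show ?thesis .
  qed
  have "filterlim (\<lambda>N. (1 / c) * harm N) at_top sequentially"
    by (rule filterlim_tendsto_pos_mult_at_top[OF tendsto_const _ harm_at_top]) (use c in simp)
  then have lim: "(\<lambda>N. exp (- (1 / c) * harm N)) \<longlonglongrightarrow> 0"
    by (simp add: filterlim_compose[OF exp_at_bot] filterlim_uminus_at_top)
  show ?thesis
    by (rule tendsto_sandwich[OF _ _ tendsto_const lim]) (use x D le arith_ratio_prod_nonneg in auto)
qed

section \<open>Balls and edges of \<open>\<int>\<^sup>d\<close>\<close>

lemma ball1_subset_box: "ball1 (x::'d::finite site) R \<subseteq> PiE UNIV (\<lambda>j. {x j - int R .. x j + int R})"
proof
  fix y assume "y \<in> ball1 x R"
  hence sum_le: "(\<Sum>j\<in>UNIV. \<bar>y j - x j\<bar>) \<le> int R" by (simp add: ball1_def dist1_def)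
  have coord_le: "\<bar>y j - x j\<bar> \<le> int R" for j
    using member_le_sum[of j UNIV "\<lambda>j. \<bar>y j - x j\<bar>"] sum_le by simp
  have "y j \<in> {x j - int R .. x j + int R}" for j
    using coord_le[of j] by (simp add: abs_le_iff)
  then show "y \<in> PiE UNIV (\<lambda>j. {x j - int R .. x j + int R})"
    by (simp add: PiE_UNIV_domain)
qed

lemma finite_ball1: "finite (ball1 (x::'d::finite site) R)"
  by (rule finite_subset[OF ball1_subset_box]) (auto intro: finite_PiE)

lemma card_ball1_le: "card (ball1 (x::'d::finite site) R) \<le> (2*R+1) ^ CARD('d)"
proof -
  have "card (ball1 x R) \<le> card (PiE UNIV (\<lambda>j. {x j - int R .. x j + int R}))"
    by (rule card_mono[OF _ ball1_subset_box]) (auto intro: finite_PiE)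
  also have "\<dots> = (2*R+1) ^ CARD('d)"
    by (simp add: card_PiE nat_add_distrib nat_mult_distrib)
  finally show ?thesis .
qed

lemma center_in_ball1: "x \<in> ball1 (x::'d::finite site) R"
  by (simp add: ball1_def dist1_def)

lemma ballcard_ge_1: "ballcard TYPE('d::finite) R \<ge> 1"
  unfolding ballcard_def using finite_ball1 center_in_ball1
  by (metis One_nat_def Suc_leI card_gt_0_iff empty_iff)

lemma voter_rate_nonneg: "0 \<le> 1 / (real (ballcard TYPE('d::finite) R) - 1)"
  using ballcard_ge_1[where 'd='d and R=R] by simp

text \<open>For \<open>R = 0\<close> the ball is a singleton and the rate is \<open>1 / 0 = 0\<close>.\<close>

lemma voter_rate_le_1: "1 / (real (ballcard TYPE('d::finite) R) - 1) \<le> 1"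
  using ballcard_ge_1[where 'd='d and R=R]
  by (cases "ballcard TYPE('d) R = 1") simp_all

lemma edges1_subset: "edges1 (x::'d::finite site) R \<subseteq> ball1 x R \<times> UNIV"
  by (auto simp: edges1_def ends_def)

lemma finite_edges1: "finite (edges1 (x::'d::finite site) R)"
  by (rule finite_subset[OF edges1_subset]) (simp add: finite_ball1)

definition edges1_bound :: "'d::finite itself \<Rightarrow> nat \<Rightarrow> nat" where
  "edges1_bound _ R = (2*R+1) ^ CARD('d) * CARD('d)"

lemma card_edges1_le: "card (edges1 (x::'d::finite site) R) \<le> edges1_bound TYPE('d) R"
proof -
  have "card (edges1 x R) \<le> card (ball1 x R \<times> (UNIV::'d set))"
    by (rule card_mono[OF _ edges1_subset]) (simp add: finite_ball1)
  also have "\<dots> \<le> edges1_bound TYPE('d) R"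
    using card_ball1_le[of x R] by (simp add: card_cartesian_product edges1_bound_def)
  finally show ?thesis .
qed

section \<open>Jumps of the dual chain\<close>

text \<open>A jump of type (ii) of the walker at \<open>x\<close> towards \<open>y\<close>: the edges of \<open>E\<^sub>1(x,R)\<close> not yet
  in \<open>E \<union> F\<close> are revealed, those in \<open>E'\<close> open and the rest closed.\<close>

definition jump_target ::
  "nat \<Rightarrow> 'd::finite site set \<Rightarrow> 'd edge set \<Rightarrow> 'd edge set \<Rightarrow> 'd site \<Rightarrow> 'd site \<Rightarrow> 'd edge set \<Rightarrow> 'd dstate"
  where "jump_target R C E F x y E' =
    (if joined (E \<union> E') x R y then (C - {x}) \<union> {y} else C, E \<union> E', F \<union> ((edges1 x R - (E \<union> F)) - E'))"

definition jump_rate :: "real \<Rightarrow> nat \<Rightarrow> 'd::finite edge set \<Rightarrow> 'd edge set \<Rightarrow> 'd site \<Rightarrow> 'd edge set \<Rightarrow> real"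
  where "jump_rate p R E F x E' =
    p ^ card E' * (1 - p) ^ card ((edges1 x R - (E \<union> F)) - E') / (real (ballcard TYPE('d) R) - 1)"

definition dual_targets :: "nat \<Rightarrow> 'd::finite dstate \<Rightarrow> 'd dstate set" where
  "dual_targets R s = (case s of (C, E, F) \<Rightarrow> (\<lambda>e. (C, E - {e}, F - {e})) ` (E \<union> F) \<union>
     {jump_target R C E F x y E' | x y E'. x \<in> C \<and> y \<in> ball1 x R - {x} \<and> E' \<in> Pow (edges1 x R - (E \<union> F))})"

definition dual_admissible :: "nat \<Rightarrow> 'd::finite dstate \<Rightarrow> bool" where
  "dual_admissible c0 s = (case s of (C, E, F) \<Rightarrow>
     finite C \<and> finite E \<and> finite F \<and> E \<inter> F = {} \<and> card C \<le> c0)"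

lemma dual_jumpsum_unfold:
  "dual_jumpsum p v R g (C, E, F) = (\<Sum>e\<in>E \<union> F. v * g (C, E - {e}, F - {e}))
   + (\<Sum>x\<in>C. \<Sum>y\<in>ball1 x R - {x}. \<Sum>E'\<in>Pow (edges1 x R - (E \<union> F)).
        jump_rate p R E F x E' * g (jump_target R C E F x y E'))"
  by (simp add: dual_jumpsum_def Let_def jump_rate_def jump_target_def)

lemma jump_rate_nonneg: "0 \<le> p \<Longrightarrow> p \<le> 1 \<Longrightarrow> 0 \<le> jump_rate p R E F (x::'d::finite site) E'"
  unfolding jump_rate_def using voter_rate_nonneg[where 'd='d and R=R] by simp

lemma jump_rate_le_1:
  assumes "0 \<le> p" "p \<le> 1"
  shows "jump_rate p R E F (x::'d::finite site) E' \<le> 1"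
proof -
  have "p ^ card E' * (1 - p) ^ card ((edges1 x R - (E \<union> F)) - E') \<le> 1"
    using assms by (intro mult_le_one power_le_one) auto
  moreover have "0 \<le> p ^ card E' * (1 - p) ^ card ((edges1 x R - (E \<union> F)) - E')"
    using assms by simp
  ultimately have "p ^ card E' * (1 - p) ^ card ((edges1 x R - (E \<union> F)) - E')
      * (1 / (real (ballcard TYPE('d) R) - 1)) \<le> 1 * 1"
    using voter_rate_le_1[where 'd='d and R=R] voter_rate_nonneg[where 'd='d and R=R]
    by (intro mult_mono) auto
  then show ?thesis by (simp add: jump_rate_def)
qed

lemma edge_removal_in_dual_targets: "e \<in> E \<union> F \<Longrightarrow> (C, E - {e}, F - {e}) \<in> dual_targets R (C, E, F)"
  by (simp add: dual_targets_def)

lemma jump_target_in_dual_targets: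
  "x \<in> C \<Longrightarrow> y \<in> ball1 x R - {x} \<Longrightarrow> E' \<in> Pow (edges1 x R - (E \<union> F)) \<Longrightarrow>
     jump_target R C E F x y E' \<in> dual_targets R (C, E, F)"
  unfolding dual_targets_def by blast

lemma dual_targetsE:
  assumes "s' \<in> dual_targets R (C, E, F)"
  obtains e where "e \<in> E \<union> F" "s' = (C, E - {e}, F - {e})"
  | x y E' where "s' = jump_target R C E F x y E'" "x \<in> C" "y \<in> ball1 x R - {x}"
      "E' \<in> Pow (edges1 x R - (E \<union> F))"
  using assms unfolding dual_targets_def by auto

lemma dual_admissible_jump_target:
  assumes "dual_admissible c0 (C, E, F)" "x \<in> C" "E' \<subseteq> edges1 x R - (E \<union> F)"
  shows "dual_admissible c0 (jump_target R C E F x y E')"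
proof -
  have fin: "finite C" "finite E" "finite F" and "E \<inter> F = {}" "card C \<le> c0"
    using assms(1) by (auto simp: dual_admissible_def)
  moreover have "finite E'"
    using assms(3) finite_edges1[of x R] finite_subset by blast
  moreover have "card (C - {x} \<union> {y}) \<le> card C"
    using assms(2) fin(1) card_Diff1_less[of C x] by (simp add: card_insert_if)
  moreover have "finite (edges1 x R)" by (rule finite_edges1)
  ultimately show ?thesis
    using assms(3) by (auto simp: jump_target_def dual_admissible_def)
qed

lemma dual_admissible_dual_targets:
  assumes "dual_admissible c0 s" "s' \<in> dual_targets R s"
  shows "dual_admissible c0 s'"
proof -
  obtain C E F where s: "s = (C, E, F)" by (cases s)
  from assms(2)[unfolded s] show ?thesis
  proof (cases rule: dual_targetsE)
    case (1 e)
    then show ?thesis using assms(1) by (auto simp: s dual_admissible_def card_mono)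
  next
    case (2 x y E')
    then show ?thesis using assms(1) dual_admissible_jump_target by (auto simp: s)
  qed
qed

lemma dual_jumpsum_mono:
  assumes "0 \<le> p" "p \<le> 1" "0 \<le> v" and "\<And>s'. s' \<in> dual_targets R (C, E, F) \<Longrightarrow> f s' \<le> g s'"
  shows "dual_jumpsum p v R f (C, E, F) \<le> dual_jumpsum p v R g (C, E, F)"
  unfolding dual_jumpsum_unfold
  using assms(1-3) assms(4)[OF edge_removal_in_dual_targets] assms(4)[OF jump_target_in_dual_targets]
  by (intro add_mono sum_mono mult_left_mono jump_rate_nonneg) simp_all

lemma dual_jumpsum_nonneg:
  assumes "0 \<le> p" "p \<le> 1" "0 \<le> v" and "\<And>s'. s' \<in> dual_targets R (C, E, F) \<Longrightarrow> 0 \<le> f s'"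
  shows "0 \<le> dual_jumpsum p v R f (C, E, F)"
  unfolding dual_jumpsum_unfold
  using assms(1-3) assms(4)[OF edge_removal_in_dual_targets] assms(4)[OF jump_target_in_dual_targets]
  by (intro add_nonneg_nonneg sum_nonneg mult_nonneg_nonneg jump_rate_nonneg) simp_all

lemma dual_jumpsum_cong:
  assumes "\<And>s'. s' \<in> dual_targets R (C, E, F) \<Longrightarrow> f s' = g s'"
  shows "dual_jumpsum p v R f (C, E, F) = dual_jumpsum p v R g (C, E, F)"
  unfolding dual_jumpsum_unfold
  using assms[OF edge_removal_in_dual_targets] assms[OF jump_target_in_dual_targets]
  by (intro arg_cong2[where f="(+)"] sum.cong refl arg_cong2[where f="(*)"]) simp_all

lemma dual_jumpsum_add:
  "dual_jumpsum p v R (\<lambda>s. f s + g s) s = dual_jumpsum p v R f s + dual_jumpsum p v R g s"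
  by (cases s) (simp add: dual_jumpsum_unfold sum.distrib algebra_simps)

lemma dual_jumpsum_cmult: "dual_jumpsum p v R (\<lambda>s. c * f s) s = c * dual_jumpsum p v R f s"
  by (cases s) (simp add: dual_jumpsum_unfold sum_distrib_left algebra_simps)

lemma dual_jumpsum_minus_const:
  "dual_jumpsum p v R (\<lambda>s'. f s' - c) s = dual_jumpsum p v R f s - c * dual_q p v R s"
  by (cases s) (simp add: dual_q_def dual_jumpsum_unfold sum_subtractf sum_distrib_left algebra_simps)

lemma dual_q_nonneg: "0 \<le> p \<Longrightarrow> p \<le> 1 \<Longrightarrow> 0 \<le> v \<Longrightarrow> 0 \<le> dual_q p v R s"
  unfolding dual_q_def by (cases s) (auto intro: dual_jumpsum_nonneg)

lemma continuous_on_dual_jumpsum: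
  assumes "\<And>s'. s' \<in> dual_targets R (C, E, F) \<Longrightarrow> continuous_on S (\<lambda>\<tau>. f \<tau> s')"
  shows "continuous_on S (\<lambda>\<tau>. dual_jumpsum p v R (f \<tau>) (C, E, F))"
  unfolding dual_jumpsum_unfold
  using assms[OF edge_removal_in_dual_targets] assms[OF jump_target_in_dual_targets]
  by (intro continuous_intros) simp_all

section \<open>The first-jump operator\<close>

definition first_jump_op ::
  "real \<Rightarrow> real \<Rightarrow> nat \<Rightarrow> (real \<Rightarrow> 'd::finite dstate \<Rightarrow> real) \<Rightarrow> real \<Rightarrow> 'd dstate \<Rightarrow> real"
  where "first_jump_op p v R f t s =
    integral {0..t} (\<lambda>r. exp (- dual_q p v R s * r) * dual_jumpsum p v R (f (t - r)) s)"

lemma dual_u_Suc_eq: "dual_u p v R g (Suc n) = first_jump_op p v R (dual_u p v R g n)"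
  by (intro ext) (simp add: first_jump_op_def)

lemma integrable_first_jump_integrand:
  assumes "0 \<le> t" "\<And>s'. s' \<in> dual_targets R (C, E, F) \<Longrightarrow> continuous_on {0..t} (\<lambda>\<tau>. f \<tau> s')"
  shows "(\<lambda>r. exp (- q * r) * dual_jumpsum p v R (f (t - r)) (C, E, F)) integrable_on {0..t}"
proof -
  have "continuous_on {0..t} (\<lambda>\<tau>. dual_jumpsum p v R (f \<tau>) (C, E, F))"
    by (rule continuous_on_dual_jumpsum[OF assms(2)])
  then have "continuous_on {0..t} (\<lambda>r. dual_jumpsum p v R (f (t - r)) (C, E, F))"
    by (rule continuous_on_compose2) (auto intro!: continuous_intros)
  then show ?thesis
    by (intro integrable_continuous_interval continuous_intros)
qed

lemma continuous_on_first_jump_op: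
  assumes "\<And>s' T. s' \<in> dual_targets R (C, E, F) \<Longrightarrow> continuous_on {0..T} (\<lambda>\<tau>. f \<tau> s')"
  shows "continuous_on {0..T} (\<lambda>t. first_jump_op p v R f t (C, E, F))"
proof -
  let ?q = "dual_q p v R (C, E, F)"
  let ?G = "\<lambda>\<tau>. dual_jumpsum p v R (f \<tau>) (C, E, F)"
  have G: "continuous_on {0..T'} ?G" for T'
    by (rule continuous_on_dual_jumpsum[OF assms])
  then have "continuous_on {0..T} (\<lambda>t. integral {0..t} (\<lambda>\<sigma>. exp (?q * \<sigma>) * ?G \<sigma>))"
    by (intro indefinite_integral_continuous_1 integrable_continuous_interval continuous_intros)
  then have "continuous_on {0..T} (\<lambda>t. exp (- ?q * t) * integral {0..t} (\<lambda>\<sigma>. exp (?q * \<sigma>) * ?G \<sigma>))"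
    by (intro continuous_intros)
  moreover have "first_jump_op p v R f t (C, E, F)
      = exp (- ?q * t) * integral {0..t} (\<lambda>\<sigma>. exp (?q * \<sigma>) * ?G \<sigma>)" if "t \<in> {0..T}" for t
    unfolding first_jump_op_def using that by (intro integral_exp_convolution G) auto
  ultimately show ?thesis
    by (metis (no_types, lifting) continuous_on_eq)
qed

lemma first_jump_op_cong:
  assumes "\<And>\<tau> s'. \<tau> \<in> {0..t} \<Longrightarrow> s' \<in> dual_targets R (C, E, F) \<Longrightarrow> f \<tau> s' = g \<tau> s'"
  shows "first_jump_op p v R f t (C, E, F) = first_jump_op p v R g t (C, E, F)"
  unfolding first_jump_op_def
  using assms by (intro integral_cong arg_cong2[where f="(*)"] refl dual_jumpsum_cong) auto

lemma first_jump_op_add: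
  assumes "0 \<le> t"
    and "\<And>s'. s' \<in> dual_targets R (C, E, F) \<Longrightarrow> continuous_on {0..t} (\<lambda>\<tau>. f \<tau> s')"
    and "\<And>s'. s' \<in> dual_targets R (C, E, F) \<Longrightarrow> continuous_on {0..t} (\<lambda>\<tau>. g \<tau> s')"
  shows "first_jump_op p v R (\<lambda>\<tau> s'. f \<tau> s' + g \<tau> s') t (C, E, F)
       = first_jump_op p v R f t (C, E, F) + first_jump_op p v R g t (C, E, F)"
  unfolding first_jump_op_def dual_jumpsum_add distrib_left
  using assms by (intro integral_add integrable_first_jump_integrand)

lemma first_jump_op_nonneg:
  assumes "0 \<le> p" "p \<le> 1" "0 \<le> v" "0 \<le> t"
    and "\<And>s'. s' \<in> dual_targets R (C, E, F) \<Longrightarrow> continuous_on {0..t} (\<lambda>\<tau>. f \<tau> s')"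
    and "\<And>\<tau> s'. \<tau> \<in> {0..t} \<Longrightarrow> s' \<in> dual_targets R (C, E, F) \<Longrightarrow> 0 \<le> f \<tau> s'"
  shows "0 \<le> first_jump_op p v R f t (C, E, F)"
  unfolding first_jump_op_def
  using assms by (intro integral_nonneg integrable_first_jump_integrand mult_nonneg_nonneg dual_jumpsum_nonneg) auto

lemma continuous_on_first_jump_iter:
  assumes "\<And>s T. dual_admissible c0 s \<Longrightarrow> continuous_on {0..T} (\<lambda>t. U t s)"
  shows "dual_admissible c0 s \<Longrightarrow> continuous_on {0..T} (\<lambda>t. (first_jump_op p v R ^^ N) U t s)"
proof (induction N arbitrary: s T)
  case 0
  then show ?case by (simp add: assms)
next
  case (Suc N)
  obtain C E F where "s = (C, E, F)" by (cases s)
  with Suc show ?case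
    by (simp add: continuous_on_first_jump_op dual_admissible_dual_targets)
qed

lemma continuous_on_dual_u: "continuous_on {0..T} (\<lambda>t. dual_u p v R g n t s)"
proof (induction n arbitrary: s T)
  case 0
  then show ?case by (simp add: continuous_intros)
next
  case (Suc n)
  obtain C E F where "s = (C, E, F)" by (cases s)
  with Suc show ?case
    unfolding dual_u_Suc_eq by (simp add: continuous_on_first_jump_op)
qed

section \<open>The duality function\<close>

definition Hbound :: "real \<Rightarrow> 'd::finite dstate \<Rightarrow> real" where
  "Hbound p s = (case s of (C, E, F) \<Rightarrow> inverse p ^ card E * inverse (1 - p) ^ card F)"

lemma Hfun_altdef:
  "Hfun p (\<eta>, \<zeta>) (C, E, F) = Hbound p (C, E, F)
     * (\<Prod>x\<in>C. of_bool (\<eta> x)) * (\<Prod>e\<in>E. of_bool (\<zeta> e)) * (\<Prod>e\<in>F. of_bool (\<not> \<zeta> e))"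
proof -
  have "(\<Prod>e\<in>F. 1 - (of_bool (\<zeta> e)::real)) = (\<Prod>e\<in>F. of_bool (\<not> \<zeta> e))"
    by (rule prod.cong) auto
  then show ?thesis
    unfolding Hfun_def Hbound_def prod.case
    by (simp only: power_int_minus power_inverse power_int_of_nat)
qed

lemma Hbound_nonneg: "0 < p \<Longrightarrow> p < 1 \<Longrightarrow> 0 \<le> Hbound p s"
  by (cases s) (simp add: Hbound_def)

lemma Hbound_mono:
  assumes "0 < p" "p < 1" "card E' \<le> card E" "card F' \<le> card F"
  shows "Hbound p (C', E', F') \<le> Hbound p (C, E, F)"
  unfolding Hbound_def prod.case using assms
  by (intro mult_mono power_increasing) (auto simp: one_le_inverse)

lemma Hfun_nonneg: "0 < p \<Longrightarrow> p < 1 \<Longrightarrow> 0 \<le> Hfun p \<xi> s"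
  by (cases \<xi>; cases s) (auto simp: Hfun_altdef intro!: mult_nonneg_nonneg prod_nonneg Hbound_nonneg)

lemma Hfun_le_Hbound:
  assumes "0 < p" "p < 1"
  shows "Hfun p \<xi> s \<le> Hbound p s"
proof -
  obtain \<eta> \<zeta> C E F where \<xi>: "\<xi> = (\<eta>, \<zeta>)" and s: "s = (C, E, F)" by (cases \<xi>; cases s)
  have "(\<Prod>x\<in>C. (of_bool (\<eta> x)::real)) * (\<Prod>e\<in>E. of_bool (\<zeta> e)) * (\<Prod>e\<in>F. of_bool (\<not> \<zeta> e)) \<le> 1"
    by (intro mult_le_one prod_le_1 prod_nonneg mult_nonneg_nonneg) auto
  from mult_left_mono[OF this Hbound_nonneg[OF assms]] show ?thesis
    by (simp add: \<xi> s Hfun_altdef mult.assoc)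
qed

lemma Hfun_remove_open:
  assumes "e \<in> E" "finite E"
  shows "Hfun p (\<eta>, \<zeta>) (C, E, F) = of_bool (\<zeta> e) * inverse p * Hfun p (\<eta>, \<zeta>) (C, E - {e}, F)"
proof -
  have "inverse p ^ card E = inverse p * inverse p ^ card (E - {e})"
    using card_Suc_Diff1[OF assms(2,1)] by (metis power_Suc)
  moreover have "(\<Prod>e\<in>E. of_bool (\<zeta> e) :: real) = of_bool (\<zeta> e) * (\<Prod>e\<in>E - {e}. of_bool (\<zeta> e))"
    using assms by (simp add: prod.remove)
  ultimately show ?thesis
    unfolding Hfun_altdef Hbound_def prod.case by (simp add: algebra_simps)
qed

lemma Hfun_remove_closed:
  assumes "e \<in> F" "finite F"
  shows "Hfun p (\<eta>, \<zeta>) (C, E, F) = of_bool (\<not> \<zeta> e) * inverse (1 - p) * Hfun p (\<eta>, \<zeta>) (C, E, F - {e})"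
proof -
  have "inverse (1 - p) ^ card F = inverse (1 - p) * inverse (1 - p) ^ card (F - {e})"
    using card_Suc_Diff1[OF assms(2,1)] by (metis power_Suc)
  moreover have "(\<Prod>e\<in>F. of_bool (\<not> \<zeta> e) :: real) = of_bool (\<not> \<zeta> e) * (\<Prod>e\<in>F - {e}. of_bool (\<not> \<zeta> e))"
    using assms by (simp add: prod.remove)
  ultimately show ?thesis
    unfolding Hfun_altdef Hbound_def prod.case by (simp add: algebra_simps)
qed

lemma Hfun_upd_edge: "e \<notin> E \<Longrightarrow> e \<notin> F \<Longrightarrow> Hfun p (\<eta>, \<zeta>(e := b)) (C, E, F) = Hfun p (\<eta>, \<zeta>) (C, E, F)"
  unfolding Hfun_altdef by (intro arg_cong2[where f="(*)"] prod.cong refl) auto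

lemma Hfun_upd_site: "x \<notin> C \<Longrightarrow> Hfun p (\<eta>(x := b), \<zeta>) (C, E, F) = Hfun p (\<eta>, \<zeta>) (C, E, F)"
  unfolding Hfun_altdef by (intro arg_cong2[where f="(*)"] prod.cong refl) auto

text \<open>The flip rates \<open>(1 - p) v\<close> and \<open>p v\<close> exactly compensate the weights \<open>p\<^sup>-\<^sup>1\<close> and \<open>(1 - p)\<^sup>-\<^sup>1\<close>.\<close>

lemma Hfun_edge_flip:
  assumes p: "0 < p" "p < 1" and fin: "finite E" "finite F" and disj: "E \<inter> F = {}"
  shows "(if \<zeta> e then (1 - p) * v else p * v) * (Hfun p (\<eta>, \<zeta>(e := \<not> \<zeta> e)) (C, E, F) - Hfun p (\<eta>, \<zeta>) (C, E, F))
     = (if e \<in> E \<union> F then v * (Hfun p (\<eta>, \<zeta>) (C, E - {e}, F - {e}) - Hfun p (\<eta>, \<zeta>) (C, E, F)) else 0)"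
proof -
  consider "e \<in> E" | "e \<in> F" | "e \<notin> E \<union> F" by blast
  then show ?thesis
  proof cases
    case 1
    with disj have "e \<notin> F" by blast
    let ?W = "Hfun p (\<eta>, \<zeta>) (C, E - {e}, F)"
    have flipped: "Hfun p (\<eta>, \<zeta>(e := \<not> \<zeta> e)) (C, E, F) = of_bool (\<not> \<zeta> e) * inverse p * ?W"
      using Hfun_remove_open[OF 1 fin(1), of p \<eta> "\<zeta>(e := \<not> \<zeta> e)"] Hfun_upd_edge[of e "E - {e}" F]
        \<open>e \<notin> F\<close> by simp
    have current: "Hfun p (\<eta>, \<zeta>) (C, E, F) = of_bool (\<zeta> e) * inverse p * ?W"
      by (rule Hfun_remove_open[OF 1 fin(1)])
    show ?thesis
      unfolding flipped current using 1 \<open>e \<notin> F\<close> p by (cases "\<zeta> e") (simp_all add: field_simps)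
  next
    case 2
    with disj have "e \<notin> E" by blast
    let ?W = "Hfun p (\<eta>, \<zeta>) (C, E, F - {e})"
    have flipped: "Hfun p (\<eta>, \<zeta>(e := \<not> \<zeta> e)) (C, E, F) = of_bool (\<zeta> e) * inverse (1 - p) * ?W"
      using Hfun_remove_closed[OF 2 fin(2), of p \<eta> "\<zeta>(e := \<not> \<zeta> e)"] Hfun_upd_edge[of e E "F - {e}"]
        \<open>e \<notin> E\<close> by simp
    have current: "Hfun p (\<eta>, \<zeta>) (C, E, F) = of_bool (\<not> \<zeta> e) * inverse (1 - p) * ?W"
      by (rule Hfun_remove_closed[OF 2 fin(2)])
    show ?thesis
      unfolding flipped current using 2 \<open>e \<notin> E\<close> p by (cases "\<zeta> e") (simp_all add: field_simps)
  next
    case 3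
    then show ?thesis by (simp add: Hfun_upd_edge)
  qed
qed

lemma sum_jump_rate:
  assumes "0 \<le> p" "p \<le> 1"
  shows "(\<Sum>E'\<in>Pow (edges1 x R - (E \<union> F)). jump_rate p R E F (x::'d::finite site) E')
           = 1 / (real (ballcard TYPE('d) R) - 1)"
proof -
  let ?S = "edges1 x R - (E \<union> F)"
  have "finite ?S" using finite_edges1[of x R] by blast
  from prod_add[OF this, of "\<lambda>_. p" "\<lambda>_. 1 - p"]
  have "(\<Sum>X\<in>Pow ?S. p ^ card X * (1 - p) ^ card (?S - X)) = 1" by simp
  then show ?thesis
    unfolding jump_rate_def by (simp flip: sum_divide_distrib)
qed

lemma power_mult_inverse_power_add: "(p::real) \<noteq> 0 \<Longrightarrow> p ^ a * inverse p ^ (c + a) = inverse p ^ c"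
  by (simp add: power_add power_mult_distrib[symmetric])

lemma jump_rate_mult_Hbound:
  assumes p: "0 < p" "p < 1" and fin: "finite E" "finite F" and E': "E' \<subseteq> edges1 x R - (E \<union> F)"
  shows "jump_rate p R E F (x::'d::finite site) E' * Hbound p (jump_target R C E F x y E')
           = Hbound p (C, E, F) / (real (ballcard TYPE('d) R) - 1)"
proof -
  let ?S = "edges1 x R - (E \<union> F)"
  have fS: "finite ?S" using finite_edges1[of x R] by blast
  have "finite E'" using E' fS finite_subset by blast
  then have cards: "card (E \<union> E') = card E + card E'" "card (F \<union> (?S - E')) = card F + card (?S - E')"
    using fin fS E' by (auto intro: card_Un_disjoint)
  have "jump_rate p R E F x E' * Hbound p (jump_target R C E F x y E')
      = (p ^ card E' * inverse p ^ (card E + card E'))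
        * ((1 - p) ^ card (?S - E') * inverse (1 - p) ^ (card F + card (?S - E')))
        / (real (ballcard TYPE('d) R) - 1)"
    unfolding jump_rate_def jump_target_def Hbound_def prod.case cards by (simp add: ac_simps)
  also have "\<dots> = Hbound p (C, E, F) / (real (ballcard TYPE('d) R) - 1)"
    using p by (simp add: power_mult_inverse_power_add Hbound_def)
  finally show ?thesis .
qed

lemma prod_open_closed_eq_indicator:
  assumes "E' \<subseteq> S" "finite S"
  shows "(\<Prod>e\<in>E'. of_bool (\<zeta> e)) * (\<Prod>e\<in>S - E'. of_bool (\<not> \<zeta> e)) = (of_bool (E' = {e\<in>S. \<zeta> e}) :: real)"
proof -
  have "finite E'" using assms finite_subset by blast
  with assms show ?thesis by (auto simp: prod_of_bool_eq)
qed

lemma prod_site_update: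
  assumes "x \<in> C" "finite C"
  shows "(\<Prod>z\<in>C - {x} \<union> {y}. of_bool (\<eta> z)) = (\<Prod>z\<in>C. of_bool ((\<eta>(x := \<eta> y)) z) :: real)"
  using assms by (auto simp: prod_of_bool_eq)

lemma joined_revealed_eq:
  assumes "\<forall>e\<in>E. \<zeta> e" "\<forall>e\<in>F. \<not> \<zeta> e"
  shows "joined (E \<union> {e\<in>edges1 x R - (E \<union> F). \<zeta> e}) x R y = joined {e. \<zeta> e} x R y"
proof -
  have "(\<exists>e\<in>E \<union> {e\<in>edges1 x R - (E \<union> F). \<zeta> e}. ends e = {u, w}) \<longleftrightarrow> (\<exists>e\<in>{e. \<zeta> e}. ends e = {u, w})"
    if "u \<in> ball1 x R" "w \<in> ball1 x R" for u w
  proof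
    assume "\<exists>e\<in>{e. \<zeta> e}. ends e = {u, w}"
    then obtain e where "\<zeta> e" "ends e = {u, w}" by blast
    moreover from this have "e \<in> edges1 x R" using that by (simp add: edges1_def)
    ultimately show "\<exists>e\<in>E \<union> {e\<in>edges1 x R - (E \<union> F). \<zeta> e}. ends e = {u, w}"
      using assms(2) by blast
  qed (use assms(1) in blast)
  then have "{(u, w). u \<in> ball1 x R \<and> w \<in> ball1 x R \<and> (\<exists>e\<in>E \<union> {e\<in>edges1 x R - (E \<union> F). \<zeta> e}. ends e = {u, w})}
      = {(u, w). u \<in> ball1 x R \<and> w \<in> ball1 x R \<and> (\<exists>e\<in>{e. \<zeta> e}. ends e = {u, w})}"
    by blast
  then show ?thesis
    unfolding joined_def by simp
qed

lemma jump_rate_mult_Hfun: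
  assumes p: "0 < p" "p < 1" and fin: "finite E" "finite F" and E': "E' \<subseteq> edges1 x R - (E \<union> F)"
  shows "jump_rate p R E F (x::'d::finite site) E' * Hfun p (\<eta>, \<zeta>) (jump_target R C E F x y E')
     = Hbound p (C, E, F) / (real (ballcard TYPE('d) R) - 1)
       * (\<Prod>z\<in>(if joined (E \<union> E') x R y then C - {x} \<union> {y} else C). of_bool (\<eta> z))
       * ((\<Prod>e\<in>E. of_bool (\<zeta> e)) * (\<Prod>e\<in>F. of_bool (\<not> \<zeta> e)))
       * of_bool (E' = {e\<in>edges1 x R - (E \<union> F). \<zeta> e})"
proof -
  let ?S = "edges1 x R - (E \<union> F)"
  let ?C' = "if joined (E \<union> E') x R y then C - {x} \<union> {y} else C"
  have fS: "finite ?S" using finite_edges1[of x R] by blast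
  have "finite E'" using E' fS finite_subset by blast
  then have split_E: "(\<Prod>e\<in>E \<union> E'. of_bool (\<zeta> e)) = (\<Prod>e\<in>E. of_bool (\<zeta> e)) * (\<Prod>e\<in>E'. (of_bool (\<zeta> e)::real))"
    and split_F: "(\<Prod>e\<in>F \<union> (?S - E'). of_bool (\<not> \<zeta> e))
        = (\<Prod>e\<in>F. of_bool (\<not> \<zeta> e)) * (\<Prod>e\<in>?S - E'. (of_bool (\<not> \<zeta> e)::real))"
    using fin fS E' by (auto intro: prod.union_disjoint)
  have "Hfun p (\<eta>, \<zeta>) (jump_target R C E F x y E') = Hbound p (jump_target R C E F x y E')
      * (\<Prod>z\<in>?C'. of_bool (\<eta> z)) * ((\<Prod>e\<in>E. of_bool (\<zeta> e)) * (\<Prod>e\<in>F. of_bool (\<not> \<zeta> e)))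
      * ((\<Prod>e\<in>E'. of_bool (\<zeta> e)) * (\<Prod>e\<in>?S - E'. of_bool (\<not> \<zeta> e)))"
    unfolding jump_target_def Hfun_altdef split_E split_F by (simp only: ac_simps)
  then show ?thesis
    unfolding prod_open_closed_eq_indicator[OF E' fS]
    by (simp only: jump_rate_mult_Hbound[OF assms, of C y, symmetric] ac_simps)
qed

text \<open>Of all ways to reveal the fresh edges of the ball, only the one agreeing with \<open>\<zeta>\<close> has
  nonzero weight in \<open>H(\<eta>, \<zeta>, \<cdot>)\<close>, and for it connectivity through revealed open edges is
  connectivity in \<open>\<zeta>\<close> (\<open>joined_revealed_eq\<close>); the weights \<open>p ^ |E'| (1 - p) ^ |F'|\<close> cancel the
  normalisation of \<open>H\<close>.\<close>

lemma Hfun_voter_move: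
  assumes p: "0 < p" "p < 1" and fin: "finite C" "finite E" "finite F" and x: "x \<in> C"
  shows "(\<Sum>E'\<in>Pow (edges1 x R - (E \<union> F)). jump_rate p R E F (x::'d::finite site) E'
            * (Hfun p (\<eta>, \<zeta>) (jump_target R C E F x y E') - Hfun p (\<eta>, \<zeta>) (C, E, F)))
    = 1 / (real (ballcard TYPE('d) R) - 1) * of_bool (joined {e. \<zeta> e} x R y)
        * (Hfun p (\<eta>(x := \<eta> y), \<zeta>) (C, E, F) - Hfun p (\<eta>, \<zeta>) (C, E, F))"
proof -
  let ?S = "edges1 x R - (E \<union> F)"
  let ?Es = "{e\<in>?S. \<zeta> e}"
  let ?c = "1 / (real (ballcard TYPE('d) R) - 1)"
  let ?B = "Hbound p (C, E, F)"
  let ?C' = "if joined (E \<union> ?Es) x R y then C - {x} \<union> {y} else C"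
  let ?Z = "(\<Prod>e\<in>E. of_bool (\<zeta> e)) * (\<Prod>e\<in>F. (of_bool (\<not> \<zeta> e)::real))"
  have fS: "finite ?S" using finite_edges1[of x R] by blast
  have "(\<Sum>E'\<in>Pow ?S. jump_rate p R E F x E' * Hfun p (\<eta>, \<zeta>) (jump_target R C E F x y E'))
      = (\<Sum>E'\<in>Pow ?S. if E' = ?Es then ?B / (real (ballcard TYPE('d) R) - 1) * (\<Prod>z\<in>?C'. of_bool (\<eta> z)) * ?Z else 0)"
    using p fin by (intro sum.cong refl) (simp add: jump_rate_mult_Hfun)
  also have "\<dots> = ?c * ?B * (\<Prod>z\<in>?C'. of_bool (\<eta> z)) * ?Z"
    using fS by (subst sum.delta) auto
  finally have revealed: "(\<Sum>E'\<in>Pow ?S. jump_rate p R E F x E' * Hfun p (\<eta>, \<zeta>) (jump_target R C E F x y E'))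
      = ?c * ?B * (\<Prod>z\<in>?C'. of_bool (\<eta> z)) * ?Z" .
  have diff: "(\<Sum>E'\<in>Pow ?S. jump_rate p R E F x E'
        * (Hfun p (\<eta>, \<zeta>) (jump_target R C E F x y E') - Hfun p (\<eta>, \<zeta>) (C, E, F)))
      = ?c * ?B * (\<Prod>z\<in>?C'. of_bool (\<eta> z)) * ?Z - ?c * Hfun p (\<eta>, \<zeta>) (C, E, F)"
    using p revealed sum_jump_rate[of p R E F x]
    by (simp add: right_diff_distrib sum_subtractf flip: sum_distrib_right)
  have H: "Hfun p (\<eta>', \<zeta>) (C, E, F) = ?B * (\<Prod>z\<in>C. of_bool (\<eta>' z)) * ?Z" for \<eta>'
    by (simp add: Hfun_altdef mult.assoc)
  show ?thesis
  proof (cases "(\<forall>e\<in>E. \<zeta> e) \<and> (\<forall>e\<in>F. \<not> \<zeta> e)")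
    case False
    then have Z0: "?Z = 0" using fin by (simp add: prod_of_bool_eq)
    show ?thesis unfolding diff unfolding H Z0 by simp
  next
    case True
    then have Z1: "?Z = 1" using fin by (simp add: prod_of_bool_eq)
    have "joined (E \<union> ?Es) x R y = joined {e. \<zeta> e} x R y"
      using True by (intro joined_revealed_eq) auto
    then show ?thesis
      unfolding diff unfolding H Z1 using prod_site_update[OF x fin(1), of \<eta> y]
      by (cases "joined {e. \<zeta> e} x R y") (simp_all add: algebra_simps)
  qed
qed

theorem voter_gen_Hfun:
  fixes C :: "'d::finite site set"
  assumes p: "0 < p" "p < 1" and fin: "finite C" "finite E" "finite F" and disj: "E \<inter> F = {}"
  shows "voter_gen p v R (\<lambda>\<omega>. Hfun p \<omega> (C, E, F)) (\<eta>, \<zeta>)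
     = dual_jumpsum p v R (Hfun p (\<eta>, \<zeta>)) (C, E, F) - dual_q p v R (C, E, F) * Hfun p (\<eta>, \<zeta>) (C, E, F)"
proof -
  let ?H = "Hfun p (\<eta>, \<zeta>) (C, E, F)"
  have edges: "(\<Sum>\<^sub>\<infinity>e\<in>UNIV. (if \<zeta> e then (1 - p) * v else p * v) * (Hfun p (\<eta>, \<zeta>(e := \<not> \<zeta> e)) (C, E, F) - ?H))
      = (\<Sum>e\<in>E \<union> F. v * (Hfun p (\<eta>, \<zeta>) (C, E - {e}, F - {e}) - ?H))"
    unfolding Hfun_edge_flip[OF p fin(2,3) disj]
    by (subst infsum_eq_sum_support[of "E \<union> F"]) (use fin in auto)
  have sites: "(\<Sum>\<^sub>\<infinity>x\<in>UNIV. \<Sum>y\<in>ball1 x R - {x}. 1 / (real (ballcard TYPE('d) R) - 1)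
        * of_bool (joined {e. \<zeta> e} x R y) * (Hfun p (\<eta>(x := \<eta> y), \<zeta>) (C, E, F) - ?H))
      = (\<Sum>x\<in>C. \<Sum>y\<in>ball1 x R - {x}. \<Sum>E'\<in>Pow (edges1 x R - (E \<union> F)).
           jump_rate p R E F x E' * (Hfun p (\<eta>, \<zeta>) (jump_target R C E F x y E') - ?H))"
    by (subst infsum_eq_sum_support[of C]) (use fin in \<open>auto simp: Hfun_upd_site Hfun_voter_move[OF p fin]\<close>)
  have "dual_jumpsum p v R (Hfun p (\<eta>, \<zeta>)) (C, E, F) - dual_q p v R (C, E, F) * ?H
      = dual_jumpsum p v R (\<lambda>s'. Hfun p (\<eta>, \<zeta>) s' - ?H) (C, E, F)"
    by (simp add: dual_jumpsum_minus_const mult.commute)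
  then show ?thesis
    unfolding voter_gen_def prod.case edges sites by (simp only: dual_jumpsum_unfold)
qed

section \<open>Moments of the voter model\<close>

lemma Hfun_measurable: "(\<lambda>\<omega>. Hfun p \<omega> s) \<in> borel_measurable (VM::'d::finite vconf measure)"
proof -
  obtain C E F where s: "s = (C, E, F)" by (cases s)
  have "(\<lambda>\<omega>. Hfun p \<omega> s) = (\<lambda>\<omega>. Hbound p s * (\<Prod>x\<in>C. of_bool (fst \<omega> x))
          * (\<Prod>e\<in>E. of_bool (snd \<omega> e)) * (\<Prod>e\<in>F. of_bool (\<not> snd \<omega> e)))"
    by (auto simp: s Hfun_altdef)
  then show ?thesis unfolding VM_def by simp
qed

lemma Hfun_is_local:
  assumes "finite C" "finite E" "finite F"
  shows "is_local (\<lambda>\<omega>. Hfun p \<omega> (C, E, F))"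
  unfolding is_local_def
proof (intro exI[of _ C] exI[of _ "E \<union> F"] conjI allI impI)
  fix \<eta> \<zeta> \<eta>' \<zeta>' :: "_ \<Rightarrow> bool"
  assume "\<forall>x\<in>C. \<eta> x = \<eta>' x" "\<forall>e\<in>E \<union> F. \<zeta> e = \<zeta>' e"
  then show "Hfun p (\<eta>, \<zeta>) (C, E, F) = Hfun p (\<eta>', \<zeta>') (C, E, F)"
    unfolding Hfun_altdef by (intro arg_cong2[where f="(*)"] prod.cong refl) auto
qed (use assms in auto)

lemma integrable_Hfun:
  assumes "prob_space M" "sets M = sets (VM::'d::finite vconf measure)" "0 < p" "p < 1"
  shows "integrable M (\<lambda>\<omega>. Hfun p \<omega> s)"
proof -
  interpret prob_space M by fact
  show ?thesis
  proof (rule integrable_const_bound[where B = "Hbound p s"])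
    have "norm (Hfun p \<omega> s) \<le> Hbound p s" for \<omega>
      using Hfun_le_Hbound[OF assms(3,4), of \<omega> s] Hfun_nonneg[OF assms(3,4), of \<omega> s] by simp
    then show "AE \<omega> in M. norm (Hfun p \<omega> s) \<le> Hbound p s" by simp
    show "(\<lambda>\<omega>. Hfun p \<omega> s) \<in> borel_measurable M"
      using Hfun_measurable measurable_cong_sets[OF assms(2) refl] by blast
  qed
qed

lemma
  assumes "\<And>s'. s' \<in> dual_targets R (C, E, F) \<Longrightarrow> integrable M (\<lambda>\<omega>. G \<omega> s')"
  shows integrable_dual_jumpsum: "integrable M (\<lambda>\<omega>. dual_jumpsum p v R (G \<omega>) (C, E, F))"
    and integral_dual_jumpsum:
      "(\<integral>\<omega>. dual_jumpsum p v R (G \<omega>) (C, E, F) \<partial>M) = dual_jumpsum p v R (\<lambda>s'. \<integral>\<omega>. G \<omega> s' \<partial>M) (C, E, F)"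
proof -
  note edge = assms[OF edge_removal_in_dual_targets] and walk = assms[OF jump_target_in_dual_targets]
  have walk_xy: "integrable M (\<lambda>\<omega>. \<Sum>E'\<in>Pow (edges1 x R - (E \<union> F)).
      jump_rate p R E F x E' * G \<omega> (jump_target R C E F x y E'))"
    if "x \<in> C" "y \<in> ball1 x R - {x}" for x y
    using walk[OF that] by (intro Bochner_Integration.integrable_sum Bochner_Integration.integrable_mult_right)
  have walk_x: "integrable M (\<lambda>\<omega>. \<Sum>y\<in>ball1 x R - {x}. \<Sum>E'\<in>Pow (edges1 x R - (E \<union> F)).
      jump_rate p R E F x E' * G \<omega> (jump_target R C E F x y E'))"
    if "x \<in> C" for x
    using walk_xy[OF that] by (rule Bochner_Integration.integrable_sum)
  have edges: "integrable M (\<lambda>\<omega>. \<Sum>e\<in>E \<union> F. v * G \<omega> (C, E - {e}, F - {e}))"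
    using edge by (intro Bochner_Integration.integrable_sum Bochner_Integration.integrable_mult_right) auto
  have walks: "integrable M (\<lambda>\<omega>. \<Sum>x\<in>C. \<Sum>y\<in>ball1 x R - {x}. \<Sum>E'\<in>Pow (edges1 x R - (E \<union> F)).
      jump_rate p R E F x E' * G \<omega> (jump_target R C E F x y E'))"
    using walk_x by (rule Bochner_Integration.integrable_sum)
  show "integrable M (\<lambda>\<omega>. dual_jumpsum p v R (G \<omega>) (C, E, F))"
    unfolding dual_jumpsum_unfold using edges walks by (rule Bochner_Integration.integrable_add)
  have "(\<integral>\<omega>. (\<Sum>x\<in>C. \<Sum>y\<in>ball1 x R - {x}. \<Sum>E'\<in>Pow (edges1 x R - (E \<union> F)).
          jump_rate p R E F x E' * G \<omega> (jump_target R C E F x y E')) \<partial>M)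
      = (\<Sum>x\<in>C. \<integral>\<omega>. (\<Sum>y\<in>ball1 x R - {x}. \<Sum>E'\<in>Pow (edges1 x R - (E \<union> F)).
          jump_rate p R E F x E' * G \<omega> (jump_target R C E F x y E')) \<partial>M)"
    using walk_x by (intro Bochner_Integration.integral_sum)
  also have "\<dots> = (\<Sum>x\<in>C. \<Sum>y\<in>ball1 x R - {x}. \<integral>\<omega>. (\<Sum>E'\<in>Pow (edges1 x R - (E \<union> F)).
          jump_rate p R E F x E' * G \<omega> (jump_target R C E F x y E')) \<partial>M)"
    using walk_xy by (intro sum.cong refl Bochner_Integration.integral_sum)
  also have "\<dots> = (\<Sum>x\<in>C. \<Sum>y\<in>ball1 x R - {x}. \<Sum>E'\<in>Pow (edges1 x R - (E \<union> F)).
          jump_rate p R E F x E' * (\<integral>\<omega>. G \<omega> (jump_target R C E F x y E') \<partial>M))"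
    using walk by (intro sum.cong refl) (simp add: Bochner_Integration.integral_sum)
  finally show "(\<integral>\<omega>. dual_jumpsum p v R (G \<omega>) (C, E, F) \<partial>M) = dual_jumpsum p v R (\<lambda>s'. \<integral>\<omega>. G \<omega> s' \<partial>M) (C, E, F)"
    unfolding dual_jumpsum_unfold Bochner_Integration.integral_add[OF edges walks]
    using edge by (simp add: Bochner_Integration.integral_sum)
qed

lemma space_VM: "space VM = UNIV"
  by (auto simp: VM_def space_pair_measure space_PiM PiE_UNIV_domain)

definition voter_moment ::
  "('d::finite vconf \<Rightarrow> real \<Rightarrow> 'd vconf measure) \<Rightarrow> 'd vconf \<Rightarrow> real \<Rightarrow> real \<Rightarrow> 'd dstate \<Rightarrow> real"
  where "voter_moment \<mu> \<xi> p t s = (\<integral>\<omega>. Hfun p \<omega> s \<partial>\<mu> \<xi> t)"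

context
  fixes p v :: real and R :: nat and \<mu> :: "'d::finite vconf \<Rightarrow> real \<Rightarrow> 'd vconf measure"
  assumes p: "0 < p" "p < 1" and v: "0 \<le> v" and law: "voter_law p v R \<mu>"
begin

lemma prob_space_voter_law: "0 \<le> t \<Longrightarrow> prob_space (\<mu> \<xi> t)"
  using law unfolding voter_law_def by blast

lemma sets_voter_law: "0 \<le> t \<Longrightarrow> sets (\<mu> \<xi> t) = sets VM"
  using law unfolding voter_law_def by blast

lemma voter_moment_0: "voter_moment \<mu> \<xi> p 0 s = Hfun p \<xi> s"
proof -
  have "\<mu> \<xi> 0 = return VM \<xi>" using law unfolding voter_law_def by blast
  then show ?thesis
    unfolding voter_moment_def using Hfun_measurable[of p s] by (simp add: integral_return space_VM)
qed

lemma voter_moment_nonneg: "0 \<le> voter_moment \<mu> \<xi> p t s"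
  unfolding voter_moment_def by (rule Bochner_Integration.integral_nonneg) (rule Hfun_nonneg[OF p])

lemma voter_moment_le_Hbound:
  assumes "0 \<le> t"
  shows "voter_moment \<mu> \<xi> p t s \<le> Hbound p s"
proof -
  interpret prob_space "\<mu> \<xi> t" using prob_space_voter_law[OF assms] .
  have "voter_moment \<mu> \<xi> p t s \<le> (\<integral>\<omega>. Hbound p s \<partial>\<mu> \<xi> t)"
    unfolding voter_moment_def
    by (rule integral_mono) (simp_all add: integrable_Hfun[OF prob_space_voter_law[OF assms] sets_voter_law[OF assms] p] Hfun_le_Hbound[OF p])
  then show ?thesis by (simp add: prob_space)
qed

lemma voter_moment_has_derivative:
  fixes C :: "'d site set"
  assumes fin: "finite C" "finite E" "finite F" and disj: "E \<inter> F = {}" and t: "0 \<le> t"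
  shows "((\<lambda>r. voter_moment \<mu> \<xi> p r (C, E, F)) has_real_derivative
     dual_jumpsum p v R (voter_moment \<mu> \<xi> p t) (C, E, F) - dual_q p v R (C, E, F) * voter_moment \<mu> \<xi> p t (C, E, F))
     (at t within {0..})"
proof -
  have integrable: "integrable (\<mu> \<xi> t) (\<lambda>\<omega>. Hfun p \<omega> s')" for s'
    using prob_space_voter_law[OF t] sets_voter_law[OF t] by (intro integrable_Hfun p)
  have "((\<lambda>r. voter_moment \<mu> \<xi> p r (C, E, F)) has_real_derivative
      (\<integral>\<omega>. voter_gen p v R (\<lambda>\<omega>. Hfun p \<omega> (C, E, F)) \<omega> \<partial>\<mu> \<xi> t)) (at t within {0..})"
    using law t Hfun_is_local[OF fin] Hfun_measurable unfolding voter_law_def voter_moment_def by blast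
  moreover have "voter_gen p v R (\<lambda>\<omega>. Hfun p \<omega> (C, E, F)) \<omega>
      = dual_jumpsum p v R (Hfun p \<omega>) (C, E, F) - dual_q p v R (C, E, F) * Hfun p \<omega> (C, E, F)" for \<omega>
    using voter_gen_Hfun[OF p fin disj, of v R "fst \<omega>" "snd \<omega>"] by simp
  moreover have "(\<integral>\<omega>. dual_jumpsum p v R (Hfun p \<omega>) (C, E, F) \<partial>\<mu> \<xi> t) = dual_jumpsum p v R (voter_moment \<mu> \<xi> p t) (C, E, F)"
    using integral_dual_jumpsum[of R C E F "\<mu> \<xi> t" "\<lambda>\<omega> s'. Hfun p \<omega> s'"] integrable
    by (simp add: voter_moment_def[abs_def])
  ultimately show ?thesis
    using integrable integrable_dual_jumpsum[of R C E F "\<mu> \<xi> t" "\<lambda>\<omega> s'. Hfun p \<omega> s'"]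
    by (simp add: Bochner_Integration.integral_diff voter_moment_def)
qed

lemma continuous_on_voter_moment:
  assumes "dual_admissible c0 s"
  shows "continuous_on {0..T} (\<lambda>t. voter_moment \<mu> \<xi> p t s)"
proof -
  obtain C E F where s: "s = (C, E, F)" by (cases s)
  show ?thesis
    unfolding s
  proof (rule DERIV_continuous_on)
    fix t assume "t \<in> {0..T}"
    with assms show "((\<lambda>r. voter_moment \<mu> \<xi> p r (C, E, F)) has_real_derivative
       dual_jumpsum p v R (voter_moment \<mu> \<xi> p t) (C, E, F) - dual_q p v R (C, E, F) * voter_moment \<mu> \<xi> p t (C, E, F))
       (at t within {0..T})"
      by (intro DERIV_subset[OF voter_moment_has_derivative]) (auto simp: s dual_admissible_def)
  qed
qed

lemma voter_moment_first_jump: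
  assumes "dual_admissible c0 (C, E, F)" "0 \<le> t"
  shows "voter_moment \<mu> \<xi> p t (C, E, F)
    = dual_u p v R (Hfun p \<xi>) 0 t (C, E, F) + first_jump_op p v R (voter_moment \<mu> \<xi> p) t (C, E, F)"
  unfolding dual_u.simps first_jump_op_def voter_moment_0[symmetric]
  using assms
  by (intro linear_ode_variation_of_constants DERIV_subset[OF voter_moment_has_derivative])
    (auto simp: dual_admissible_def)

lemma voter_moment_iter_eq:
  "dual_admissible c0 s \<Longrightarrow> 0 \<le> t \<Longrightarrow> (first_jump_op p v R ^^ N) (voter_moment \<mu> \<xi> p) t s
     = dual_u p v R (Hfun p \<xi>) N t s + (first_jump_op p v R ^^ Suc N) (voter_moment \<mu> \<xi> p) t s"
proof (induction N arbitrary: s t)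
  case 0
  then show ?case by (cases s) (simp add: voter_moment_first_jump)
next
  case (Suc N)
  obtain C E F where s: "s = (C, E, F)" by (cases s)
  let ?U = "voter_moment \<mu> \<xi> p" and ?T = "first_jump_op p v R"
  have targets: "dual_admissible c0 s'" if "s' \<in> dual_targets R (C, E, F)" for s'
    using Suc.prems(1) that dual_admissible_dual_targets s by blast
  have "(?T ^^ Suc N) ?U t s = ?T ((?T ^^ N) ?U) t (C, E, F)"
    by (simp add: s)
  also have "\<dots> = ?T (\<lambda>\<tau> s'. dual_u p v R (Hfun p \<xi>) N \<tau> s' + (?T ^^ Suc N) ?U \<tau> s') t (C, E, F)"
    by (intro first_jump_op_cong Suc.IH targets) auto
  also have "\<dots> = ?T (dual_u p v R (Hfun p \<xi>) N) t (C, E, F) + ?T ((?T ^^ Suc N) ?U) t (C, E, F)"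
    using Suc.prems(2) targets
    by (intro first_jump_op_add continuous_on_dual_u continuous_on_first_jump_iter continuous_on_voter_moment)
  finally show ?case
    by (simp add: s dual_u_Suc_eq)
qed

lemma voter_moment_expansion:
  "dual_admissible c0 s \<Longrightarrow> 0 \<le> t \<Longrightarrow> voter_moment \<mu> \<xi> p t s
     = (\<Sum>n<N. dual_u p v R (Hfun p \<xi>) n t s) + (first_jump_op p v R ^^ N) (voter_moment \<mu> \<xi> p) t s"
  by (induction N) (simp_all add: voter_moment_iter_eq)

end

section \<open>Non-explosion of the dual chain\<close>

definition walk_branching :: "'d::finite itself \<Rightarrow> nat \<Rightarrow> nat" where
  "walk_branching _ R = (2*R+1) ^ CARD('d) * 2 ^ edges1_bound TYPE('d) R"

lemma walk_sum_le:
  fixes C :: "'d::finite site set"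
  assumes "finite C" "card C \<le> c0" "0 \<le> B"
    and le: "\<And>x y E'. x \<in> C \<Longrightarrow> y \<in> ball1 x R - {x} \<Longrightarrow> E' \<in> Pow (edges1 x R - (E \<union> F)) \<Longrightarrow> h x y E' \<le> B"
  shows "(\<Sum>x\<in>C. \<Sum>y\<in>ball1 x R - {x}. \<Sum>E'\<in>Pow (edges1 x R - (E \<union> F)). h x y E')
           \<le> real c0 * real (walk_branching TYPE('d) R) * B"
proof -
  have pow_card: "real (card (Pow (edges1 x R - (E \<union> F)))) \<le> 2 ^ edges1_bound TYPE('d) R" for x :: "'d site"
  proof -
    have "card (edges1 x R - (E \<union> F)) \<le> edges1_bound TYPE('d) R"
      using card_mono[OF finite_edges1, of "edges1 x R - (E \<union> F)" x R] card_edges1_le[of x R] by auto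
    then show ?thesis
      using finite_edges1[of x R] by (simp add: card_Pow power_increasing)
  qed
  have ball_card: "card (ball1 x R - {x}) \<le> (2*R+1) ^ CARD('d)" for x :: "'d site"
    using card_mono[OF finite_ball1, of "ball1 x R - {x}" x R] card_ball1_le[of x R] by auto
  have inner: "(\<Sum>E'\<in>Pow (edges1 x R - (E \<union> F)). h x y E') \<le> 2 ^ edges1_bound TYPE('d) R * B"
    if "x \<in> C" "y \<in> ball1 x R - {x}" for x y
  proof -
    have "(\<Sum>E'\<in>Pow (edges1 x R - (E \<union> F)). h x y E') \<le> real (card (Pow (edges1 x R - (E \<union> F)))) * B"
      using le[OF that] by (intro sum_bounded_above) auto
    also have "\<dots> \<le> 2 ^ edges1_bound TYPE('d) R * B"
      using pow_card assms(3) by (rule mult_right_mono)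
    finally show ?thesis .
  qed
  have middle: "(\<Sum>y\<in>ball1 x R - {x}. \<Sum>E'\<in>Pow (edges1 x R - (E \<union> F)). h x y E')
      \<le> real (walk_branching TYPE('d) R) * B" if "x \<in> C" for x
  proof -
    have "(\<Sum>y\<in>ball1 x R - {x}. \<Sum>E'\<in>Pow (edges1 x R - (E \<union> F)). h x y E')
        \<le> real (card (ball1 x R - {x})) * (2 ^ edges1_bound TYPE('d) R * B)"
      using inner[OF that] by (intro sum_bounded_above) auto
    also have "\<dots> \<le> real ((2*R+1) ^ CARD('d)) * (2 ^ edges1_bound TYPE('d) R * B)"
      using of_nat_mono[OF ball_card] assms(3) by (intro mult_right_mono) auto
    finally show ?thesis by (simp add: walk_branching_def)
  qed
  have "(\<Sum>x\<in>C. \<Sum>y\<in>ball1 x R - {x}. \<Sum>E'\<in>Pow (edges1 x R - (E \<union> F)). h x y E')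
      \<le> real (card C) * (real (walk_branching TYPE('d) R) * B)"
    using middle by (intro sum_bounded_above) auto
  also have "\<dots> \<le> real c0 * (real (walk_branching TYPE('d) R) * B)"
    using assms(2,3) by (intro mult_right_mono) auto
  finally show ?thesis by simp
qed

lemma dual_jumpsum_Hbound_le:
  fixes C :: "'d::finite site set"
  assumes p: "0 < p" "p < 1" and v: "0 \<le> v" and adm: "dual_admissible c0 (C, E, F)"
  shows "dual_jumpsum p v R (Hbound p) (C, E, F)
           \<le> (dual_q p v R (C, E, F) + real c0 * real (walk_branching TYPE('d) R)) * Hbound p (C, E, F)"
proof -
  have fin: "finite C" "finite E" "finite F" "card C \<le> c0" using adm by (auto simp: dual_admissible_def)
  let ?B = "Hbound p (C, E, F)"
  let ?walks = "\<lambda>g. \<Sum>x\<in>C. \<Sum>y\<in>ball1 x R - {x}. \<Sum>E'\<in>Pow (edges1 x R - (E \<union> F)).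
                  jump_rate p R E F x E' * g (jump_target R C E F x y E')"
  have "Hbound p (C, E - {e}, F - {e}) \<le> ?B" for e
    using fin by (intro Hbound_mono p card_mono) auto
  then have edges_le: "(\<Sum>e\<in>E \<union> F. v * Hbound p (C, E - {e}, F - {e})) \<le> (\<Sum>e\<in>E \<union> F. v * 1) * ?B"
    unfolding sum_distrib_right using v by (intro sum_mono) (simp add: mult_left_mono)
  have "?B / (real (ballcard TYPE('d) R) - 1) \<le> ?B"
    using mult_left_mono[OF voter_rate_le_1 Hbound_nonneg[OF p]] by simp
  then have walks_le: "?walks (Hbound p) \<le> real c0 * real (walk_branching TYPE('d) R) * ?B"
    using fin p Hbound_nonneg[OF p] by (intro walk_sum_le) (auto simp: jump_rate_mult_Hbound)
  have "0 \<le> ?walks (\<lambda>_. 1)"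
    using p by (intro sum_nonneg) (auto intro: jump_rate_nonneg)
  then have "0 \<le> ?walks (\<lambda>_. 1) * ?B"
    using Hbound_nonneg[OF p] by (rule mult_nonneg_nonneg)
  with edges_le walks_le show ?thesis
    unfolding dual_q_def dual_jumpsum_unfold distrib_right by linarith
qed

lemma dual_q_le:
  fixes C :: "'d::finite site set"
  assumes p: "0 < p" "p < 1" and adm: "dual_admissible c0 (C, E, F)"
  shows "dual_q p v R (C, E, F) \<le> v * real (card (E \<union> F)) + real c0 * real (walk_branching TYPE('d) R)"
proof -
  have "(\<Sum>x\<in>C. \<Sum>y\<in>ball1 x R - {x}. \<Sum>E'\<in>Pow (edges1 x R - (E \<union> F)). jump_rate p R E F x E' * 1)
      \<le> real c0 * real (walk_branching TYPE('d) R) * 1"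
    using adm p jump_rate_le_1[of p] by (intro walk_sum_le) (auto simp: dual_admissible_def)
  then show ?thesis unfolding dual_q_def dual_jumpsum_unfold by (simp add: mult.commute)
qed

text \<open>The factor \<open>2\<close> makes \<open>rate_bound\<close> dominate \<open>dual_q + c0 \<cdot> walk_branching\<close> (\<open>dual_q_le\<close>),
  the quantity that enters \<open>first_jump_op_le\<close>.\<close>

definition rate_bound :: "real \<Rightarrow> nat \<Rightarrow> nat \<Rightarrow> 'd::finite dstate \<Rightarrow> real" where
  "rate_bound v c0 R s = (case s of (C, E, F) \<Rightarrow>
     v * real (card (E \<union> F)) + 2 * (real c0 * real (walk_branching TYPE('d) R)))"

lemma rate_bound_nonneg: "0 \<le> v \<Longrightarrow> 0 \<le> rate_bound v c0 R s"
  by (cases s) (simp add: rate_bound_def)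

lemma rate_bound_dual_targets:
  fixes C :: "'d::finite site set"
  assumes v: "0 \<le> v" and adm: "dual_admissible c0 (C, E, F)" and s': "s' \<in> dual_targets R (C, E, F)"
  shows "rate_bound v c0 R s' \<le> rate_bound v c0 R (C, E, F) + v * real (edges1_bound TYPE('d) R)"
proof -
  have fin: "finite E" "finite F" using adm by (auto simp: dual_admissible_def)
  from s' show ?thesis
  proof (cases rule: dual_targetsE)
    case (1 e)
    have "card (E - {e} \<union> (F - {e})) \<le> card (E \<union> F)"
      using fin by (intro card_mono) auto
    then have "v * real (card (E - {e} \<union> (F - {e}))) \<le> v * real (card (E \<union> F))"
      using v by (intro mult_left_mono) auto
    moreover have "0 \<le> v * real (edges1_bound TYPE('d) R)" using v by simp
    ultimately show ?thesis
      by (simp add: 1 rate_bound_def)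
  next
    case (2 x y E')
    have "card ((E \<union> E') \<union> (F \<union> (edges1 x R - (E \<union> F) - E'))) \<le> card ((E \<union> F) \<union> edges1 x R)"
      using fin finite_edges1[of x R] 2 by (intro card_mono) auto
    also have "\<dots> \<le> card (E \<union> F) + edges1_bound TYPE('d) R"
      using card_Un_le[of "E \<union> F" "edges1 x R"] card_edges1_le[of x R] by linarith
    finally have "v * real (card ((E \<union> E') \<union> (F \<union> (edges1 x R - (E \<union> F) - E'))))
        \<le> v * (real (card (E \<union> F)) + real (edges1_bound TYPE('d) R))"
      using v by (intro mult_left_mono) auto
    then show ?thesis
      by (simp add: 2 jump_target_def rate_bound_def algebra_simps)
  qed
qed

lemma first_jump_op_le:
  fixes C :: "'d::finite site set" and R c0 :: nat
  defines "M \<equiv> real c0 * real (walk_branching TYPE('d) R)"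
  assumes p: "0 < p" "p < 1" and v: "0 \<le> v" and adm: "dual_admissible c0 (C, E, F)"
    and t: "0 \<le> t" and K: "0 \<le> K"
    and cont: "\<And>s'. s' \<in> dual_targets R (C, E, F) \<Longrightarrow> continuous_on {0..t} (\<lambda>\<tau>. f \<tau> s')"
    and le: "\<And>\<tau> s'. \<tau> \<in> {0..t} \<Longrightarrow> s' \<in> dual_targets R (C, E, F) \<Longrightarrow>
               f \<tau> s' \<le> K * exp ((M + 1) * \<tau>) * Hbound p s'"
  shows "first_jump_op p v R f t (C, E, F) \<le> K * exp ((M + 1) * t) * Hbound p (C, E, F)
           * ((dual_q p v R (C, E, F) + M) / (dual_q p v R (C, E, F) + M + 1))"
proof -
  let ?q = "dual_q p v R (C, E, F)" and ?B = "Hbound p (C, E, F)"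
  define a where "a = ?q + M + 1"
  define L where "L = K * (?q + M) * ?B * exp ((M + 1) * t)"
  have q: "0 \<le> ?q" using p v by (intro dual_q_nonneg) auto
  have M: "0 \<le> M" unfolding M_def by simp
  have a: "0 < a" unfolding a_def using q M by simp
  have L: "0 \<le> L"
    unfolding L_def using q M K Hbound_nonneg[OF p, of "(C, E, F)"] by (intro mult_nonneg_nonneg add_nonneg_nonneg) auto
  have integrand_le: "exp (- ?q * r) * dual_jumpsum p v R (f (t - r)) (C, E, F) \<le> L * exp (- a * r)"
    if r: "r \<in> {0..t}" for r
  proof -
    let ?c = "K * exp ((M + 1) * (t - r))"
    have "dual_jumpsum p v R (f (t - r)) (C, E, F) \<le> dual_jumpsum p v R (\<lambda>s'. ?c * Hbound p s') (C, E, F)"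
      using p v r le by (intro dual_jumpsum_mono) auto
    also have "\<dots> = ?c * dual_jumpsum p v R (Hbound p) (C, E, F)"
      by (rule dual_jumpsum_cmult)
    also have "\<dots> \<le> ?c * ((?q + M) * ?B)"
      using dual_jumpsum_Hbound_le[OF p v adm] K unfolding M_def by (intro mult_left_mono) auto
    finally have "exp (- ?q * r) * dual_jumpsum p v R (f (t - r)) (C, E, F) \<le> exp (- ?q * r) * (?c * ((?q + M) * ?B))"
      by (intro mult_left_mono) auto
    also have "exp (- ?q * r) * exp ((M + 1) * (t - r)) = exp ((M + 1) * t) * exp (- a * r)"
      unfolding mult_exp_exp a_def by (simp add: algebra_simps)
    then have "exp (- ?q * r) * (?c * ((?q + M) * ?B)) = L * exp (- a * r)"
      unfolding L_def by (simp add: ac_simps)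
    finally show ?thesis .
  qed
  have "first_jump_op p v R f t (C, E, F) \<le> integral {0..t} (\<lambda>r. L * exp (- a * r))"
    unfolding first_jump_op_def using integrand_le
    by (intro integral_le integrable_first_jump_integrand t cont integrable_continuous_interval continuous_intros)
  also have "\<dots> = L * ((1 - exp (- a * t)) / a)"
    by (rule integral_unique[OF has_integral_mult_right[OF has_integral_exp_neg[OF a t]]])
  also have "\<dots> \<le> L / a"
    using L a by (simp add: divide_simps mult_left_le)
  also have "\<dots> = K * exp ((M + 1) * t) * ?B * ((?q + M) / (?q + M + 1))"
    unfolding L_def a_def by (simp add: field_simps)
  finally show ?thesis .
qed

lemma first_jump_op_le_arith_ratio_prod:
  fixes C :: "'d::finite site set" and R c0 :: nat and v :: real
  defines "M \<equiv> real c0 * real (walk_branching TYPE('d) R)" and "D \<equiv> v * real (edges1_bound TYPE('d) R)"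
  assumes p: "0 < p" "p < 1" and v: "0 \<le> v" and adm: "dual_admissible c0 (C, E, F)" and t: "0 \<le> t"
    and cont: "\<And>s'. s' \<in> dual_targets R (C, E, F) \<Longrightarrow> continuous_on {0..t} (\<lambda>\<tau>. f \<tau> s')"
    and le: "\<And>\<tau> s'. \<tau> \<in> {0..t} \<Longrightarrow> s' \<in> dual_targets R (C, E, F) \<Longrightarrow>
               f \<tau> s' \<le> Hbound p s' * exp ((M + 1) * \<tau>) * arith_ratio_prod D (rate_bound v c0 R s') N"
  shows "first_jump_op p v R f t (C, E, F)
           \<le> Hbound p (C, E, F) * exp ((M + 1) * t) * arith_ratio_prod D (rate_bound v c0 R (C, E, F)) (Suc N)"
proof -
  let ?q = "dual_q p v R (C, E, F)" and ?B = "Hbound p (C, E, F)"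
  define l where "l = rate_bound v c0 R (C, E, F)"
  define K where "K = arith_ratio_prod D (l + D) N"
  have D: "0 \<le> D" and l: "0 \<le> l" unfolding D_def l_def using v by (simp_all add: rate_bound_nonneg)
  have K: "0 \<le> K" unfolding K_def using D l by (simp add: arith_ratio_prod_nonneg)
  have "f \<tau> s' \<le> K * exp ((M + 1) * \<tau>) * Hbound p s'"
    if "\<tau> \<in> {0..t}" "s' \<in> dual_targets R (C, E, F)" for \<tau> s'
  proof -
    have "arith_ratio_prod D (rate_bound v c0 R s') N \<le> K"
      unfolding K_def l_def D_def
      using v rate_bound_dual_targets[OF v adm that(2)] rate_bound_nonneg[OF v, of c0 R s']
      by (intro arith_ratio_prod_mono) auto
    then have "Hbound p s' * exp ((M + 1) * \<tau>) * arith_ratio_prod D (rate_bound v c0 R s') N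
        \<le> Hbound p s' * exp ((M + 1) * \<tau>) * K"
      using Hbound_nonneg[OF p, of s'] by (intro mult_left_mono) auto
    with le[OF that] show ?thesis by (simp add: ac_simps)
  qed
  then have "first_jump_op p v R f t (C, E, F) \<le> K * exp ((M + 1) * t) * ?B * ((?q + M) / (?q + M + 1))"
    unfolding M_def using p v adm t K cont by (intro first_jump_op_le) auto
  also have "\<dots> \<le> K * exp ((M + 1) * t) * ?B * (l / (l + 1))"
  proof (intro mult_left_mono divide_plus_one_mono)
    show "0 \<le> ?q + M" using p v by (simp add: M_def dual_q_nonneg)
    show "?q + M \<le> l" using dual_q_le[OF p adm, of v R] by (simp add: l_def rate_bound_def M_def)
    show "0 \<le> K * exp ((M + 1) * t) * ?B" using K Hbound_nonneg[OF p, of "(C, E, F)"] by simp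
  qed
  also have "\<dots> = ?B * exp ((M + 1) * t) * arith_ratio_prod D l (Suc N)"
    unfolding arith_ratio_prod_Suc K_def by (simp add: ac_simps)
  finally show ?thesis unfolding l_def .
qed

context
  fixes p v :: real and R c0 :: nat and U :: "real \<Rightarrow> 'd::finite dstate \<Rightarrow> real"
  assumes p: "0 < p" "p < 1" and v: "0 \<le> v"
    and cont: "\<And>s T. dual_admissible c0 s \<Longrightarrow> continuous_on {0..T} (\<lambda>t. U t s)"
    and nonneg: "\<And>t s. 0 \<le> t \<Longrightarrow> 0 \<le> U t s"
    and bounded: "\<And>t s. 0 \<le> t \<Longrightarrow> U t s \<le> Hbound p s"
begin

lemma first_jump_iter_nonneg:
  "dual_admissible c0 s \<Longrightarrow> 0 \<le> t \<Longrightarrow> 0 \<le> (first_jump_op p v R ^^ N) U t s"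
proof (induction N arbitrary: s t)
  case 0
  then show ?case by (simp add: nonneg)
next
  case (Suc N)
  obtain C E F where s: "s = (C, E, F)" by (cases s)
  have targets: "dual_admissible c0 s'" if "s' \<in> dual_targets R (C, E, F)" for s'
    using Suc.prems(1) that dual_admissible_dual_targets s by blast
  show ?case
    unfolding s funpow.simps o_apply using p v Suc.prems(2) targets
    by (intro first_jump_op_nonneg continuous_on_first_jump_iter[OF cont] Suc.IH) auto
qed

lemma first_jump_iter_le:
  "dual_admissible c0 s \<Longrightarrow> 0 \<le> t \<Longrightarrow> (first_jump_op p v R ^^ N) U t s
     \<le> Hbound p s * exp ((real c0 * real (walk_branching TYPE('d) R) + 1) * t)
       * arith_ratio_prod (v * real (edges1_bound TYPE('d) R)) (rate_bound v c0 R s) N"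
proof (induction N arbitrary: s t)
  case 0
  have "Hbound p s * 1 \<le> Hbound p s * exp ((real c0 * real (walk_branching TYPE('d) R) + 1) * t)"
    using Hbound_nonneg[OF p, of s] 0 by (intro mult_left_mono) auto
  then show ?case
    using bounded[OF 0(2), of s] by simp
next
  case (Suc N)
  obtain C E F where s: "s = (C, E, F)" by (cases s)
  have targets: "dual_admissible c0 s'" if "s' \<in> dual_targets R (C, E, F)" for s'
    using Suc.prems(1) that dual_admissible_dual_targets s by blast
  show ?case
    unfolding s funpow.simps o_apply using p v Suc.prems targets
    by (intro first_jump_op_le_arith_ratio_prod continuous_on_first_jump_iter[OF cont] Suc.IH)
      (auto simp: s)
qed

lemma first_jump_iter_tendsto_0:
  assumes "dual_admissible c0 s" "0 \<le> t"
  shows "(\<lambda>N. (first_jump_op p v R ^^ N) U t s) \<longlonglongrightarrow> 0"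
proof (rule tendsto_sandwich[OF _ _ tendsto_const])
  show "\<forall>\<^sub>F N in sequentially. 0 \<le> (first_jump_op p v R ^^ N) U t s"
    using first_jump_iter_nonneg[OF assms] by simp
  show "\<forall>\<^sub>F N in sequentially. (first_jump_op p v R ^^ N) U t s
      \<le> Hbound p s * exp ((real c0 * real (walk_branching TYPE('d) R) + 1) * t)
        * arith_ratio_prod (v * real (edges1_bound TYPE('d) R)) (rate_bound v c0 R s) N"
    using first_jump_iter_le[OF assms] by simp
  show "(\<lambda>N. Hbound p s * exp ((real c0 * real (walk_branching TYPE('d) R) + 1) * t)
      * arith_ratio_prod (v * real (edges1_bound TYPE('d) R)) (rate_bound v c0 R s) N) \<longlonglongrightarrow> 0"
    using v by (intro tendsto_mult_right_zero arith_ratio_prod_tendsto_0 rate_bound_nonneg) auto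
qed

end

theorem lemma4p9:
  fixes p v :: real and R :: nat
    and \<mu> :: "'d::finite vconf \<Rightarrow> real \<Rightarrow> 'd vconf measure"
    and \<eta> :: "'d site \<Rightarrow> bool" and \<zeta> :: "'d edge \<Rightarrow> bool"
    and C :: "'d site set" and E F :: "'d edge set" and t :: real
  assumes "0 < p" and "p < 1" and "0 < v"
    and "voter_law p v R \<mu>"
    and "finite C" and "finite E" and "finite F" and "E \<inter> F = {}"
    and "0 \<le> t"
  shows "(\<integral>\<xi>. Hfun p \<xi> (C, E, F) \<partial>(\<mu> (\<eta>, \<zeta>) t))
         = dual_expect p v R (Hfun p (\<eta>, \<zeta>)) t (C, E, F)"
proof -
  note p = assms(1,2) and law = assms(4) and t = assms(9)
  have v: "0 \<le> v" using assms(3) by simp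
  have adm: "dual_admissible (card C) (C, E, F)" using assms(5-8) by (simp add: dual_admissible_def)
  let ?U = "voter_moment \<mu> (\<eta>, \<zeta>) p" and ?u = "\<lambda>n. dual_u p v R (Hfun p (\<eta>, \<zeta>)) n t (C, E, F)"
  have "(\<lambda>N. (first_jump_op p v R ^^ N) ?U t (C, E, F)) \<longlonglongrightarrow> 0"
    using p v continuous_on_voter_moment[OF p v law] voter_moment_nonneg[OF p v law]
      voter_moment_le_Hbound[OF p v law] adm t
    by (rule first_jump_iter_tendsto_0)
  from tendsto_diff[OF tendsto_const this]
  have "(\<lambda>N. ?U t (C, E, F) - (first_jump_op p v R ^^ N) ?U t (C, E, F)) \<longlonglongrightarrow> ?U t (C, E, F)"
    by simp
  moreover have "?U t (C, E, F) - (first_jump_op p v R ^^ N) ?U t (C, E, F) = (\<Sum>n<N. ?u n)" for N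
    using voter_moment_expansion[OF p v law adm t, of "(\<eta>, \<zeta>)" N] by linarith
  ultimately have "?u sums ?U t (C, E, F)"
    unfolding sums_def by simp
  then show ?thesis
    unfolding dual_expect_def voter_moment_def by (simp add: sums_unique[symmetric])
qed

end
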